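(* Let $n$ be a positive integer and let $X$ have Student's $t$-distribution with $n$ degrees of freedom, i.e. density $f(x)=\frac{\Gamma(\frac{n+1}2)}{\sqrt{n\pi}\,\Gamma(\frac n2)(1+\frac{x^2}n)^{(n+1)/2}}$ on $\mathbb{R}$. Then $$\Pr\{|X|\ge x\}\le x\Big(\frac{n+1}{n+x^2}\Big)^{(n+1)/2}\quad\text{for } x\ge1,\qquad \Pr\{|X|\le x\}\le x\Big(\frac{n+1}{n+x^2}\Big)^{(n+1)/2}\quad\text{for } 0\le x\le1,$$ and the function $x\mapsto x\big(\frac{n+1}{n+x^2}\big)^{(n+1)/2}$ is monotonically increasing on $(0,1)$ and monotonically decreasing on $(1,\infty)$. *)

theory Defs
  imports "HOL-Probability.Probability"
begin

definition student_t_density :: "nat \<Rightarrow> real \<Rightarrow> real" where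
  "student_t_density n x =
     Gamma ((real n + 1) / 2) /
     (sqrt (real n * pi) * Gamma (real n / 2) * (1 + x\<^sup>2 / real n) powr ((real n + 1) / 2))"

definition t_bound :: "nat \<Rightarrow> real \<Rightarrow> real" where
  "t_bound n x = x * ((real n + 1) / (real n + x\<^sup>2)) powr ((real n + 1) / 2)"

end

theory Submission
  imports Defs
begin

text \<open>Write the density as \<open>f = c K\<close> with \<open>c = f 1\<close> and
\<open>K x = ((n+1)/(n+x\<^sup>2))\<^bsup>(n+1)/2\<^esup>\<close>, so that the bound is \<open>g x = x K x\<close>, with \<open>g 1 = 1\<close>
and \<open>g' = K w\<close> where \<open>w x = n(1-x\<^sup>2)/(n+x\<^sup>2)\<close> (\<open>K\<close> and \<open>w\<close> are \<open>t_kernel\<close> and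
\<open>t_slope\<close> below) decreases in \<open>|x|\<close> and vanishes at \<open>|x| = 1\<close>; this gives the monotonicity.
By symmetry \<open>P(|X| \<ge> x) = 2\<integral>\<^sub>x\<^sup>\<infinity> f\<close>, while \<open>g x = \<integral>\<^sub>x\<^sup>\<infinity> -g'\<close> for \<open>x \<ge> 1\<close>.
The difference \<open>-g' - 2f = K(-w - 2c)\<close> changes sign at most once on \<open>[1,\<infinity>)\<close>, from negative
to positive, and \<open>2\<integral>\<^sub>1\<^sup>\<infinity> f \<le> 1 = \<integral>\<^sub>1\<^sup>\<infinity> -g'\<close>; such a single crossing forces
\<open>2\<integral>\<^sub>x\<^sup>\<infinity> f \<le> \<integral>\<^sub>x\<^sup>\<infinity> -g'\<close> for every \<open>x \<ge> 1\<close>. The same argument on \<open>[0,1]\<close>, with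
\<open>g x = \<integral>\<^sub>0\<^sup>x g'\<close>, gives the bound for \<open>P(|X| \<le> x)\<close>.\<close>

text \<open>If \<open>u < v\<close> somewhere on \<open>A\<close> forces \<open>u \<le> v\<close> on all of \<open>B\<close>, then either \<open>u \<le> v\<close> on \<open>B\<close>,
  or \<open>v \<le> u\<close> on \<open>A\<close> and the excess of \<open>v\<close> over \<open>u\<close> on \<open>A \<union> B\<close> lies in \<open>B\<close>.\<close>
lemma set_nn_integral_le_single_crossing:
  fixes u v :: "'a \<Rightarrow> ennreal"
  assumes [measurable]: "u \<in> borel_measurable M" "v \<in> borel_measurable M" "A \<in> sets M" "B \<in> sets M"
    and disjoint: "A \<inter> B = {}"
    and crossing: "\<And>a b. a \<in> A \<Longrightarrow> b \<in> B \<Longrightarrow> u a < v a \<Longrightarrow> u b \<le> v b"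
    and total: "(\<integral>\<^sup>+x\<in>A \<union> B. u x \<partial>M) \<le> (\<integral>\<^sup>+x\<in>A \<union> B. v x \<partial>M)"
    and finite: "(\<integral>\<^sup>+x\<in>A. u x \<partial>M) \<noteq> \<infinity>"
  shows "(\<integral>\<^sup>+x\<in>B. u x \<partial>M) \<le> (\<integral>\<^sup>+x\<in>B. v x \<partial>M)"
proof (cases "\<exists>a\<in>A. u a < v a")
  case True
  then have "\<forall>b\<in>B. u b \<le> v b" using crossing by blast
  then show ?thesis by (intro nn_integral_mono) (auto split: split_indicator)
next
  case False
  then have vA: "(\<integral>\<^sup>+x\<in>A. v x \<partial>M) \<le> (\<integral>\<^sup>+x\<in>A. u x \<partial>M)"
    by (intro nn_integral_mono) (auto simp: not_less split: split_indicator)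
  have "(\<integral>\<^sup>+x\<in>A. u x \<partial>M) + (\<integral>\<^sup>+x\<in>B. u x \<partial>M) \<le> (\<integral>\<^sup>+x\<in>A. v x \<partial>M) + (\<integral>\<^sup>+x\<in>B. v x \<partial>M)"
    using total disjoint by (simp add: nn_integral_disjoint_pair)
  also have "\<dots> \<le> (\<integral>\<^sup>+x\<in>A. u x \<partial>M) + (\<integral>\<^sup>+x\<in>B. v x \<partial>M)"
    using vA by (rule add_right_mono)
  finally show ?thesis
    using finite by (simp add: ennreal_add_left_cancel_le)
qed

lemma sets_borel_uminus_image [measurable]:
  assumes "S \<in> sets borel"
  shows "uminus ` S \<in> sets (borel :: real measure)"
proof -
  have "uminus -` S \<inter> space borel \<in> sets (borel :: real measure)"
    using assms by (intro measurable_sets[of uminus borel]) simp_all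
  moreover have "uminus ` S = uminus -` S \<inter> space borel" by force
  ultimately show ?thesis by simp
qed

lemma set_nn_integral_lborel_uminus_image:
  fixes g :: "real \<Rightarrow> ennreal"
  assumes [measurable]: "g \<in> borel_measurable borel" "S \<in> sets borel"
    and even: "\<And>x. g (- x) = g x"
  shows "(\<integral>\<^sup>+x\<in>uminus ` S. g x \<partial>lborel) = (\<integral>\<^sup>+x\<in>S. g x \<partial>lborel)"
proof -
  have "(\<integral>\<^sup>+x\<in>uminus ` S. g x \<partial>lborel) = (\<integral>\<^sup>+x\<in>uminus ` S. g x \<partial>distr lborel borel uminus)"
    by (simp add: lborel_distr_uminus)
  also have "\<dots> = (\<integral>\<^sup>+x. g (- x) * indicator (uminus ` S) (- x) \<partial>lborel)"
    by (rule nn_integral_distr) simp_all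
  also have "\<dots> = (\<integral>\<^sup>+x\<in>S. g x \<partial>lborel)"
    by (intro nn_integral_cong) (auto simp: even image_iff split: split_indicator)
  finally show ?thesis .
qed

lemma emeasure_distributed_symmetric_preimage:
  fixes X :: "'a \<Rightarrow> real" and g :: "real \<Rightarrow> ennreal"
  assumes X: "distributed M lborel X g" and even: "\<And>x. g (- x) = g x"
    and [measurable]: "S \<in> sets borel" and overlap: "S \<inter> uminus ` S \<subseteq> {0}"
  shows "emeasure M (X -` (S \<union> uminus ` S) \<inter> space M) = 2 * (\<integral>\<^sup>+x\<in>S. g x \<partial>lborel)"
proof -
  note [measurable] = distributed_borel_measurable[OF X]
  let ?N = "density lborel g"
  have "AE x in lborel. x \<in> S \<inter> uminus ` S \<longrightarrow> g x = 0"
    using AE_lborel_singleton[of 0] by eventually_elim (use overlap in blast)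
  then have null: "S \<inter> uminus ` S \<in> null_sets ?N"
    by (simp add: null_sets_density_iff)
  have "emeasure M (X -` (S \<union> uminus ` S) \<inter> space M) = emeasure ?N (S \<union> uminus ` S)"
    by (simp add: distributed_emeasure[OF X] emeasure_density del: vimage_Un)
  also have "\<dots> = emeasure ?N S + emeasure ?N (uminus ` S)"
    using null by (rule emeasure_Un'[rotated 2]) simp_all
  also have "\<dots> = 2 * (\<integral>\<^sup>+x\<in>S. g x \<partial>lborel)"
    by (simp add: emeasure_density set_nn_integral_lborel_uminus_image even mult_2)
  finally show ?thesis .
qed

definition t_kernel :: "nat \<Rightarrow> real \<Rightarrow> real" where
  "t_kernel n x = ((real n + 1) / (real n + x\<^sup>2)) powr ((real n + 1) / 2)"

definition t_slope :: "nat \<Rightarrow> real \<Rightarrow> real" where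
  "t_slope n x = real n * (1 - x\<^sup>2) / (real n + x\<^sup>2)"

lemma t_bound_eq_t_kernel: "t_bound n x = x * t_kernel n x"
  unfolding t_bound_def t_kernel_def ..

lemma t_bound_nonneg: "0 \<le> x \<Longrightarrow> 0 \<le> t_bound n x"
  by (simp add: t_bound_def)

lemma t_kernel_pos:
  assumes "n > 0"
  shows "t_kernel n x > 0"
proof -
  have "real n + x\<^sup>2 > 0" using assms by (simp add: add_pos_nonneg)
  then show ?thesis by (simp add: t_kernel_def)
qed

lemma student_t_density_eq_t_kernel:
  assumes "n > 0"
  shows "student_t_density n x = student_t_density n 1 * t_kernel n x"
proof -
  have n: "real n > 0" using assms by simp
  have "1 + y\<^sup>2 / real n = (real n + y\<^sup>2) / real n" for y
    using n by (simp add: field_simps)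
  moreover have "real n + x\<^sup>2 > 0"
    using n by (simp add: add_pos_nonneg)
  moreover have "Gamma (real n / 2) > 0"
    using n by (intro Gamma_real_pos) simp
  ultimately show ?thesis
    using n by (simp add: student_t_density_def t_kernel_def powr_divide field_simps)
qed

lemma student_t_density_pos:
  assumes "n > 0"
  shows "student_t_density n x > 0"
proof -
  have "Gamma ((real n + 1) / 2) > 0" "Gamma (real n / 2) > 0"
    using assms by (auto intro!: Gamma_real_pos)
  moreover have "1 + x\<^sup>2 / real n > 0"
    by (simp add: add_pos_nonneg)
  ultimately show ?thesis
    using assms by (simp add: student_t_density_def)
qed

lemma student_t_density_minus: "student_t_density n (- x) = student_t_density n x"
  by (simp add: student_t_density_def)

lemma borel_measurable_student_t_density [measurable]: "student_t_density n \<in> borel_measurable borel"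
  unfolding student_t_density_def by measurable

lemma borel_measurable_t_kernel [measurable]: "t_kernel n \<in> borel_measurable borel"
  unfolding t_kernel_def by measurable

lemma borel_measurable_t_slope [measurable]: "t_slope n \<in> borel_measurable borel"
  unfolding t_slope_def by measurable

lemma t_slope_nonneg: "\<bar>x\<bar> \<le> 1 \<Longrightarrow> 0 \<le> t_slope n x"
  by (simp add: t_slope_def abs_square_le_1)

lemma t_slope_nonpos:
  assumes "1 \<le> \<bar>x\<bar>"
  shows "t_slope n x \<le> 0"
proof -
  have "1 \<le> x\<^sup>2" using assms abs_le_square_iff[of 1 x] by simp
  then show ?thesis by (simp add: t_slope_def divide_nonpos_nonneg mult_nonneg_nonpos)
qed

lemma t_slope_antimono:
  assumes "n > 0" "0 \<le> s" "s \<le> t"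
  shows "t_slope n t \<le> t_slope n s"
proof -
  have "t_slope n x = real n * (real n + 1) / (real n + x\<^sup>2) - real n" for x
  proof -
    have "real n + x\<^sup>2 > 0" using assms(1) by (simp add: add_pos_nonneg)
    then show ?thesis by (simp add: t_slope_def field_simps)
  qed
  moreover have "real n * (real n + 1) / (real n + t\<^sup>2) \<le> real n * (real n + 1) / (real n + s\<^sup>2)"
    using assms by (intro divide_left_mono add_left_mono power_mono mult_pos_pos add_pos_nonneg) auto
  ultimately show ?thesis by simp
qed

lemma two_student_t_density_less_iff:
  assumes "n > 0"
  shows "2 * student_t_density n x < t_kernel n x * y \<longleftrightarrow> 2 * student_t_density n 1 < y"
  using t_kernel_pos[OF assms, of x]
  by (subst student_t_density_eq_t_kernel[OF assms]) (simp add: ac_simps)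

lemma has_real_derivative_t_kernel:
  assumes "n > 0"
  shows "(t_kernel n has_real_derivative - t_kernel n x * (real n + 1) * x / (real n + x\<^sup>2)) (at x)"
proof -
  define m where "m = real n + 1"
  define N where "N = real n + x\<^sup>2"
  define r where "r y = m / (real n + y\<^sup>2)" for y
  have pos: "N > 0" "m > 0" using assms by (simp_all add: N_def m_def add_pos_nonneg)
  have kernel: "(\<lambda>y. r y powr (m / 2)) = t_kernel n"
    by (simp add: fun_eq_iff t_kernel_def r_def m_def)
  have "(r has_real_derivative - m * (2 * x) / N\<^sup>2) (at x)"
    unfolding r_def N_def using pos
    by (auto intro!: derivative_eq_intros simp: N_def power2_eq_square field_simps)
  then have deriv: "((\<lambda>y. r y powr (m / 2)) has_real_derivative
               m / 2 * r x powr (m / 2 - of_nat 1) * (- m * (2 * x) / N\<^sup>2)) (at x)"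
    by (rule DERIV_fun_powr) (use pos in \<open>simp add: r_def N_def[symmetric]\<close>)
  have rx: "r x = m / N" by (simp add: r_def N_def)
  have rpow: "r x powr (m / 2 - of_nat 1) = t_kernel n x * N / m"
    using pos by (subst powr_diff) (auto simp: kernel[symmetric] rx)
  have derivative_eq: "m / 2 * r x powr (m / 2 - of_nat 1) * (- m * (2 * x) / N\<^sup>2) = - t_kernel n x * m * x / N"
    unfolding rpow using pos by (simp add: field_simps power2_eq_square)
  from deriv have "(t_kernel n has_real_derivative - t_kernel n x * m * x / N) (at x)"
    unfolding derivative_eq kernel .
  then show ?thesis by (simp add: m_def N_def)
qed

lemma has_real_derivative_t_bound:
  assumes "n > 0"
  shows "(t_bound n has_real_derivative t_kernel n x * t_slope n x) (at x)"
proof -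
  have pos: "real n + x\<^sup>2 > 0" using assms by (simp add: add_pos_nonneg)
  have "((\<lambda>x. x * t_kernel n x) has_real_derivative
      x * (- t_kernel n x * (real n + 1) * x / (real n + x\<^sup>2)) + 1 * t_kernel n x) (at x)"
    by (rule DERIV_mult'[OF DERIV_ident has_real_derivative_t_kernel[OF assms]])
  moreover have "x * (- t_kernel n x * (real n + 1) * x / (real n + x\<^sup>2)) + 1 * t_kernel n x
      = t_kernel n x * t_slope n x"
    using pos by (simp add: t_slope_def power2_eq_square field_simps)
  moreover have "(\<lambda>x. x * t_kernel n x) = t_bound n" by (simp add: fun_eq_iff t_bound_eq_t_kernel)
  ultimately show ?thesis by simp
qed

lemma t_bound_tendsto_0:
  assumes "n > 0"
  shows "(t_bound n \<longlongrightarrow> 0) at_top"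
proof -
  have bound: "eventually (\<lambda>t. 0 \<le> t_bound n t \<and> t_bound n t \<le> (real n + 1) / t) at_top"
    using eventually_ge_at_top[of 1]
  proof eventually_elim
    case (elim t)
    have N: "real n + t\<^sup>2 > 0" "t\<^sup>2 \<ge> 1" using assms elim by (auto simp: add_pos_nonneg one_le_power)
    \<comment> \<open>the base of the power is at most 1 and the exponent at least 1\<close>
    have "t_kernel n t \<le> (real n + 1) / (real n + t\<^sup>2)"
      unfolding t_kernel_def using assms N by (intro powr_le_one_le) auto
    also have "\<dots> \<le> (real n + 1) / t\<^sup>2"
      using N by (intro divide_left_mono mult_pos_pos) auto
    finally have "t * t_kernel n t \<le> t * ((real n + 1) / t\<^sup>2)"
      using elim by (intro mult_left_mono) auto
    then show ?case
      using elim t_kernel_pos[OF assms, of t] by (simp add: t_bound_eq_t_kernel power2_eq_square)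
  qed
  then have lower: "eventually (\<lambda>t. 0 \<le> t_bound n t) at_top"
    and upper: "eventually (\<lambda>t. t_bound n t \<le> (real n + 1) / t) at_top"
    by (auto elim: eventually_mono)
  have "((\<lambda>t. (real n + 1) / t) \<longlongrightarrow> 0) at_top"
    by (intro tendsto_divide_0[OF tendsto_const] filterlim_at_top_imp_at_infinity filterlim_ident)
  then show ?thesis
    by (rule tendsto_sandwich[OF lower upper tendsto_const])
qed

lemma mono_on_t_bound:
  assumes "n > 0"
  shows "mono_on {-1..1} (t_bound n)"
proof (rule mono_onI)
  fix r s :: real assume rs: "r \<in> {-1..1}" "s \<in> {-1..1}" "r \<le> s"
  show "t_bound n r \<le> t_bound n s"
  proof (rule DERIV_nonneg_imp_nondecreasing[OF rs(3)])
    fix t assume "r \<le> t" "t \<le> s"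
    with rs have "\<bar>t\<bar> \<le> 1" by auto
    then show "\<exists>y. (t_bound n has_real_derivative y) (at t) \<and> 0 \<le> y"
      using assms by (intro exI[of _ "t_kernel n t * t_slope n t"] conjI has_real_derivative_t_bound mult_nonneg_nonneg
          less_imp_le[OF t_kernel_pos] t_slope_nonneg)
  qed
qed

lemma antimono_on_t_bound:
  assumes "n > 0"
  shows "antimono_on {1..} (t_bound n)"
proof (rule monotone_onI)
  fix r s :: real assume rs: "r \<in> {1..}" "s \<in> {1..}" "r \<le> s"
  show "t_bound n s \<le> t_bound n r"
  proof (rule DERIV_nonpos_imp_nonincreasing[OF rs(3)])
    fix t assume "r \<le> t" "t \<le> s"
    with rs have "1 \<le> \<bar>t\<bar>" by auto
    then show "\<exists>y. (t_bound n has_real_derivative y) (at t) \<and> y \<le> 0"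
      using assms by (intro exI[of _ "t_kernel n t * t_slope n t"] conjI has_real_derivative_t_bound mult_nonneg_nonpos
          less_imp_le[OF t_kernel_pos] t_slope_nonpos)
  qed
qed

lemma nn_integral_t_bound_derivative_atLeast:
  assumes "n > 0" "1 \<le> x"
  shows "(\<integral>\<^sup>+t\<in>{x..}. ennreal (- (t_kernel n t * t_slope n t)) \<partial>lborel) = ennreal (t_bound n x)"
proof -
  have "(\<integral>\<^sup>+t\<in>{x..}. ennreal (- (t_kernel n t * t_slope n t)) \<partial>lborel) = ennreal (0 - - t_bound n x)"
  proof (rule nn_integral_FTC_atLeast)
    show "((\<lambda>t. - t_bound n t) \<longlongrightarrow> 0) at_top"
      using tendsto_minus[OF t_bound_tendsto_0[OF assms(1)]] by simp
  qed (use assms in \<open>auto intro!: derivative_intros has_real_derivative_t_bound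
         mult_nonneg_nonpos less_imp_le[OF t_kernel_pos] t_slope_nonpos\<close>)
  then show ?thesis by simp
qed

lemma nn_integral_t_bound_derivative_Icc:
  assumes "n > 0" "0 \<le> x" "x \<le> 1"
  shows "(\<integral>\<^sup>+t\<in>{0..x}. ennreal (t_kernel n t * t_slope n t) \<partial>lborel) = ennreal (t_bound n x)"
proof -
  have "(\<integral>\<^sup>+t\<in>{0..x}. ennreal (t_kernel n t * t_slope n t) \<partial>lborel) = ennreal (t_bound n x - t_bound n 0)"
    using assms by (intro nn_integral_FTC_Icc has_real_derivative_t_bound mult_nonneg_nonneg
        less_imp_le[OF t_kernel_pos] t_slope_nonneg) auto
  then show ?thesis by (simp add: t_bound_def)
qed


lemma emeasure_student_t_symmetric_preimage:
  assumes "n > 0" and X: "distributed M lborel X (\<lambda>x. ennreal (student_t_density n x))"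
    and S: "S \<in> sets borel" "S \<inter> uminus ` S \<subseteq> {0}"
  shows "emeasure M (X -` (S \<union> uminus ` S) \<inter> space M)
    = (\<integral>\<^sup>+t\<in>S. ennreal (2 * student_t_density n t) \<partial>lborel)"
proof -
  note [measurable] = S(1)
  have "emeasure M (X -` (S \<union> uminus ` S) \<inter> space M)
      = 2 * (\<integral>\<^sup>+t\<in>S. ennreal (student_t_density n t) \<partial>lborel)"
    by (rule emeasure_distributed_symmetric_preimage[OF X _ S]) (simp add: student_t_density_minus)
  also have "\<dots> = (\<integral>\<^sup>+t. 2 * (ennreal (student_t_density n t) * indicator S t) \<partial>lborel)"
    by (intro nn_integral_cmult[symmetric]) measurable
  also have "\<dots> = (\<integral>\<^sup>+t\<in>S. ennreal (2 * student_t_density n t) \<partial>lborel)"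
    using student_t_density_pos[OF assms(1)]
    by (intro nn_integral_cong) (simp add: ennreal_mult less_imp_le mult.assoc)
  finally show ?thesis .
qed

lemma student_t_tail_le_t_bound:
  assumes "prob_space M" "n > 0"
    and X: "distributed M lborel X (\<lambda>x. ennreal (student_t_density n x))"
    and "1 \<le> x"
  shows "measure M {\<omega> \<in> space M. x \<le> \<bar>X \<omega>\<bar>} \<le> t_bound n x"
proof -
  interpret prob_space M by fact
  define u where "u t = ennreal (2 * student_t_density n t)" for t
  define v where "v t = ennreal (- (t_kernel n t * t_slope n t))" for t
  have tail: "emeasure M {\<omega> \<in> space M. y \<le> \<bar>X \<omega>\<bar>} = (\<integral>\<^sup>+t\<in>{y..}. u t \<partial>lborel)" if "1 \<le> y" for y
  proof -
    have "{\<omega> \<in> space M. y \<le> \<bar>X \<omega>\<bar>} = X -` ({y..} \<union> uminus ` {y..}) \<inter> space M"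
      by (auto simp: abs_if)
    also have "emeasure M \<dots> = (\<integral>\<^sup>+t\<in>{y..}. u t \<partial>lborel)"
      unfolding u_def by (rule emeasure_student_t_symmetric_preimage[OF assms(2) X]) (use that in auto)
    finally show ?thesis .
  qed
  have "emeasure M {\<omega> \<in> space M. x \<le> \<bar>X \<omega>\<bar>} = (\<integral>\<^sup>+t\<in>{x..}. u t \<partial>lborel)"
    by (rule tail[OF assms(4)])
  also have "\<dots> \<le> (\<integral>\<^sup>+t\<in>{x..}. v t \<partial>lborel)"
  proof (rule set_nn_integral_le_single_crossing[where A = "{1..<x}"])
    have union: "{1..<x} \<union> {x..} = {1..}" using assms(4) by auto
    have u_total: "(\<integral>\<^sup>+t\<in>{1..}. u t \<partial>lborel) \<le> 1"
      using tail[of 1] emeasure_le_1[of "{\<omega> \<in> space M. 1 \<le> \<bar>X \<omega>\<bar>}"] by simp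
    also have "1 = (\<integral>\<^sup>+t\<in>{1..}. v t \<partial>lborel)"
      using nn_integral_t_bound_derivative_atLeast[OF assms(2), of 1] by (simp add: v_def t_bound_def)
    finally show "(\<integral>\<^sup>+t\<in>{1..<x} \<union> {x..}. u t \<partial>lborel) \<le> (\<integral>\<^sup>+t\<in>{1..<x} \<union> {x..}. v t \<partial>lborel)"
      unfolding union .
    have "(\<integral>\<^sup>+t\<in>{1..<x}. u t \<partial>lborel) \<le> (\<integral>\<^sup>+t\<in>{1..}. u t \<partial>lborel)"
      by (intro nn_integral_mono) (auto split: split_indicator)
    with u_total show "(\<integral>\<^sup>+t\<in>{1..<x}. u t \<partial>lborel) \<noteq> \<infinity>"
      by (auto simp: top_unique)
  next
    fix a b assume a: "a \<in> {1..<x}" and b: "b \<in> {x..}" and "u a < v a"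
    then have "2 * student_t_density n a < t_kernel n a * - t_slope n a"
      using student_t_density_pos[OF assms(2), of a] by (simp add: u_def v_def ennreal_less_iff)
    then have "2 * student_t_density n 1 < - t_slope n a"
      unfolding two_student_t_density_less_iff[OF assms(2)] .
    also have "\<dots> \<le> - t_slope n b"
      using a b by (simp add: t_slope_antimono[OF assms(2)])
    finally have "2 * student_t_density n b < t_kernel n b * - t_slope n b"
      unfolding two_student_t_density_less_iff[OF assms(2)] .
    then show "u b \<le> v b"
      unfolding u_def v_def by (intro ennreal_leI) simp
  qed (auto simp: u_def v_def)
  also have "\<dots> = ennreal (t_bound n x)"
    using nn_integral_t_bound_derivative_atLeast[OF assms(2,4)] by (simp add: v_def)
  finally show ?thesis
    using t_bound_nonneg[of x n] assms(4) by (simp add: emeasure_eq_measure)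
qed

lemma student_t_central_le_t_bound:
  assumes "prob_space M" "n > 0"
    and X: "distributed M lborel X (\<lambda>x. ennreal (student_t_density n x))"
    and "0 \<le> x" "x \<le> 1"
  shows "measure M {\<omega> \<in> space M. \<bar>X \<omega>\<bar> \<le> x} \<le> t_bound n x"
proof -
  interpret prob_space M by fact
  define u where "u t = ennreal (2 * student_t_density n t)" for t
  define v where "v t = ennreal (t_kernel n t * t_slope n t)" for t
  have central: "emeasure M {\<omega> \<in> space M. \<bar>X \<omega>\<bar> \<le> y} = (\<integral>\<^sup>+t\<in>{0..y}. u t \<partial>lborel)" for y
  proof -
    have "{\<omega> \<in> space M. \<bar>X \<omega>\<bar> \<le> y} = X -` ({0..y} \<union> uminus ` {0..y}) \<inter> space M"
      by (auto simp: abs_if)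
    also have "emeasure M \<dots> = (\<integral>\<^sup>+t\<in>{0..y}. u t \<partial>lborel)"
      unfolding u_def by (rule emeasure_student_t_symmetric_preimage[OF assms(2) X]) auto
    finally show ?thesis .
  qed
  have "emeasure M {\<omega> \<in> space M. \<bar>X \<omega>\<bar> \<le> x} = (\<integral>\<^sup>+t\<in>{0..x}. u t \<partial>lborel)"
    by (rule central)
  also have "\<dots> \<le> (\<integral>\<^sup>+t\<in>{0..x}. v t \<partial>lborel)"
  proof (rule set_nn_integral_le_single_crossing[where A = "{x<..1}"])
    have union: "{x<..1} \<union> {0..x} = {0..1}" using assms(4,5) by auto
    have u_total: "(\<integral>\<^sup>+t\<in>{0..1}. u t \<partial>lborel) \<le> 1"
      using central[of 1] emeasure_le_1[of "{\<omega> \<in> space M. \<bar>X \<omega>\<bar> \<le> 1}"] by simp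
    also have "1 = (\<integral>\<^sup>+t\<in>{0..1}. v t \<partial>lborel)"
      using nn_integral_t_bound_derivative_Icc[OF assms(2), of 1] by (simp add: v_def t_bound_def)
    finally show "(\<integral>\<^sup>+t\<in>{x<..1} \<union> {0..x}. u t \<partial>lborel) \<le> (\<integral>\<^sup>+t\<in>{x<..1} \<union> {0..x}. v t \<partial>lborel)"
      unfolding union .
    have "(\<integral>\<^sup>+t\<in>{x<..1}. u t \<partial>lborel) \<le> (\<integral>\<^sup>+t\<in>{0..1}. u t \<partial>lborel)"
      using assms(4) by (intro nn_integral_mono) (auto split: split_indicator)
    with u_total show "(\<integral>\<^sup>+t\<in>{x<..1}. u t \<partial>lborel) \<noteq> \<infinity>"
      by (auto simp: top_unique)
  next
    fix a b assume a: "a \<in> {x<..1}" and b: "b \<in> {0..x}" and "u a < v a"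
    then have "2 * student_t_density n a < t_kernel n a * t_slope n a"
      using student_t_density_pos[OF assms(2), of a] by (simp add: u_def v_def ennreal_less_iff)
    then have "2 * student_t_density n 1 < t_slope n a"
      unfolding two_student_t_density_less_iff[OF assms(2)] .
    also have "\<dots> \<le> t_slope n b"
      using a b by (simp add: t_slope_antimono[OF assms(2)])
    finally have "2 * student_t_density n b < t_kernel n b * t_slope n b"
      unfolding two_student_t_density_less_iff[OF assms(2)] .
    then show "u b \<le> v b"
      unfolding u_def v_def by (intro ennreal_leI) simp
  qed (auto simp: u_def v_def)
  also have "\<dots> = ennreal (t_bound n x)"
    using nn_integral_t_bound_derivative_Icc[OF assms(2,4,5)] by (simp add: v_def)
  finally show ?thesis
    using t_bound_nonneg[of x n] assms(4) by (simp add: emeasure_eq_measure)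
qed

theorem corollary9:
  fixes M :: "'a measure" and X :: "'a \<Rightarrow> real" and n :: nat
  assumes "prob_space M"
    and "n > 0"
    and "distributed M lborel X (\<lambda>x. ennreal (student_t_density n x))"
  shows "(\<forall>x::real. x \<ge> 1 \<longrightarrow>
            measure M {\<omega> \<in> space M. \<bar>X \<omega>\<bar> \<ge> x} \<le> t_bound n x)
       \<and> (\<forall>x::real. 0 \<le> x \<and> x \<le> 1 \<longrightarrow>
            measure M {\<omega> \<in> space M. \<bar>X \<omega>\<bar> \<le> x} \<le> t_bound n x)
       \<and> mono_on {0<..<1} (t_bound n)
       \<and> antimono_on {1<..} (t_bound n)"
proof (intro conjI allI impI)
  show "measure M {\<omega> \<in> space M. \<bar>X \<omega>\<bar> \<ge> x} \<le> t_bound n x" if "x \<ge> 1" for x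
    using student_t_tail_le_t_bound[OF assms that] .
  show "measure M {\<omega> \<in> space M. \<bar>X \<omega>\<bar> \<le> x} \<le> t_bound n x" if "0 \<le> x \<and> x \<le> 1" for x
    using student_t_central_le_t_bound[OF assms] that by blast
  show "mono_on {0<..<1} (t_bound n)"
    using mono_on_t_bound[OF assms(2)] by (rule monotone_on_subset) auto
  show "antimono_on {1<..} (t_bound n)"
    using antimono_on_t_bound[OF assms(2)] by (rule monotone_on_subset) auto
qed

end
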